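(* Let $\mathcal{S}$ be a state space, $\mathcal{A}$ a finite action space, $\rho$ a distribution on $\mathcal{S}$, $\pi_{\mathrm{ref}}$ a full-support policy, $\beta>0$, $R>0$, $r^*:\mathcal{S}\times\mathcal{A}\to[0,R]$, and let $\Pi$ be a finite policy class with $\pi^*_{r^*}\in\Pi$ and $|\log(\pi(a|s)/\pi_{\mathrm{ref}}(a|s))|\le R/\beta$ for all $\pi\in\Pi$ and all $(s,a)$. Then for any bounded reward model $r:\mathcal{S}\times\mathcal{A}\to\mathbb{R}$ with associated optimal policy $\pi^*_r$, $$\mathrm{Cov}^{\pi^*_{r^*}|\pi^*_r}\le\min_{b\in\mathbb{R}}\mathbb{E}_{s\sim\rho}\Big[\mathbb{E}^2_{a\sim\pi^*_{r^*}(\cdot|s)}\Big[\exp\Big(\frac{|r^*(s,a)-r(s,a)-b|}{\beta}\Big)\Big]\Big].$$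
   Context: For a reward $r$, $\pi^*_r(a|s):=\pi_{\mathrm{ref}}(a|s)e^{r(s,a)/\beta}/\sum_{a'}\pi_{\mathrm{ref}}(a'|s)e^{r(s,a')/\beta}$ (the maximizer of $\mathbb{E}_{s\sim\rho}[\mathbb{E}_{a\sim\pi}r(s,a)-\beta\mathrm{KL}(\pi(\cdot|s)\|\pi_{\mathrm{ref}}(\cdot|s))]$). $\mathrm{Cov}^{\tilde\pi|\pi}:=\mathbb{E}_{s\sim\rho,a\sim\tilde\pi(\cdot|s)}[\tilde\pi(a|s)/\pi(a|s)]$. $\mathbb{E}^2[\cdot]$ denotes the square of the expectation. *)

theory Defs
  imports "HOL-Probability.Probability"
begin

definition is_policy :: "('s \<Rightarrow> 'a::finite \<Rightarrow> real) \<Rightarrow> bool" where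
  "is_policy \<pi> \<longleftrightarrow> (\<forall>s. (\<forall>a. 0 \<le> \<pi> s a) \<and> (\<Sum>a\<in>UNIV. \<pi> s a) = 1)"

definition opt_policy ::
  "('s \<Rightarrow> 'a::finite \<Rightarrow> real) \<Rightarrow> real \<Rightarrow> ('s \<Rightarrow> 'a \<Rightarrow> real) \<Rightarrow> 's \<Rightarrow> 'a \<Rightarrow> real" where
  "opt_policy \<pi>ref \<beta> r s a =
     \<pi>ref s a * exp (r s a / \<beta>) / (\<Sum>a'\<in>UNIV. \<pi>ref s a' * exp (r s a' / \<beta>))"

definition Cov ::
  "'s measure \<Rightarrow> ('s \<Rightarrow> 'a::finite \<Rightarrow> real) \<Rightarrow> ('s \<Rightarrow> 'a \<Rightarrow> real) \<Rightarrow> real" where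
  "Cov \<rho> \<pi>t \<pi> = (\<integral>s. (\<Sum>a\<in>UNIV. \<pi>t s a * (\<pi>t s a / \<pi> s a)) \<partial>\<rho>)"

end

theory Submission
  imports Defs
begin

text \<open>Fix a state s and write P, Q for the Gibbs policies of rstar and r at s.  Since both
  tilt the same reference policy, P a / Q a = e^(d a) * E_P[e^(-d)] with
  d = (rstar - r - b) / \<beta> for every shift b, so the per-state coverability term is
  E_P[e^d] * E_P[e^(-d)], and each factor is at most E_P[e^|d|].  The bound thus holds
  state by state and integrates over \<rho>.\<close>

definition gibbs :: "('a::finite \<Rightarrow> real) \<Rightarrow> ('a \<Rightarrow> real) \<Rightarrow> 'a \<Rightarrow> real" where
  "gibbs w f a = w a * exp (f a) / (\<Sum>a'\<in>UNIV. w a' * exp (f a'))"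

lemma opt_policy_eq_gibbs: "opt_policy \<pi>ref \<beta> r s = gibbs (\<pi>ref s) (\<lambda>a. r s a / \<beta>)"
  by (simp add: fun_eq_iff opt_policy_def gibbs_def)

lemma gibbs_partition_pos:
  fixes w :: "'a::finite \<Rightarrow> real"
  assumes "\<And>a. 0 < w a"
  shows "0 < (\<Sum>a\<in>UNIV. w a * exp (f a))"
  using assms by (intro sum_pos) auto

lemma gibbs_pos:
  assumes "\<And>a. 0 < w a"
  shows "0 < gibbs w f a"
  using assms gibbs_partition_pos[of w f, OF assms] by (simp add: gibbs_def)

lemma sum_gibbs:
  assumes "\<And>a. 0 < w a"
  shows "(\<Sum>a\<in>UNIV. gibbs w f a) = 1"
  using gibbs_partition_pos[of w f, OF assms] by (simp add: gibbs_def flip: sum_divide_distrib)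

lemma sum_gibbs_mult_le:
  assumes "\<And>a. 0 < w a" and "\<And>a. h a \<le> M"
  shows "(\<Sum>a\<in>UNIV. gibbs w f a * h a) \<le> M"
proof -
  have "(\<Sum>a\<in>UNIV. gibbs w f a * h a) \<le> (\<Sum>a\<in>UNIV. gibbs w f a * M)"
    using assms gibbs_pos[of w] by (intro sum_mono mult_left_mono) (auto simp: less_imp_le)
  also have "\<dots> = M"
    using assms by (simp add: sum_gibbs flip: sum_distrib_right)
  finally show ?thesis .
qed

lemma gibbs_ratio:
  assumes "\<And>a. 0 < w a"
  shows "gibbs w f a / gibbs w g a
    = exp (f a - g a - c) * (\<Sum>a'\<in>UNIV. gibbs w f a' * exp (c - (f a' - g a')))"
proof -
  define Zf where "Zf = (\<Sum>a\<in>UNIV. w a * exp (f a))"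
  define Zg where "Zg = (\<Sum>a\<in>UNIV. w a * exp (g a))"
  have "0 < Zf" "0 < Zg" unfolding Zf_def Zg_def using gibbs_partition_pos assms by blast+
  have "(\<Sum>a'\<in>UNIV. gibbs w f a' * exp (c - (f a' - g a')))
      = (\<Sum>a'\<in>UNIV. exp c / Zf * (w a' * exp (g a')))"
    by (intro sum.cong) (simp_all add: gibbs_def flip: Zf_def exp_add exp_diff)
  also have "\<dots> = exp c * Zg / Zf"
    by (simp add: Zg_def sum_distrib_left sum_divide_distrib)
  finally show ?thesis
    using \<open>0 < Zf\<close> \<open>0 < Zg\<close> assms[of a]
    by (simp add: gibbs_def exp_diff flip: Zf_def Zg_def)
qed

lemma sum_exp_mult_sum_exp_neg_le:
  fixes p d :: "'a \<Rightarrow> real"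
  assumes "\<And>a. a \<in> A \<Longrightarrow> 0 \<le> p a"
  shows "(\<Sum>a\<in>A. p a * exp (d a)) * (\<Sum>a\<in>A. p a * exp (- d a))
    \<le> (\<Sum>a\<in>A. p a * exp \<bar>d a\<bar>)\<^sup>2"
proof -
  have le: "(\<Sum>a\<in>A. p a * exp (e a)) \<le> (\<Sum>a\<in>A. p a * exp \<bar>d a\<bar>)"
    if "\<And>a. e a \<le> \<bar>d a\<bar>" for e
    using assms that by (intro sum_mono mult_left_mono) auto
  have "(\<Sum>a\<in>A. p a * exp (d a)) * (\<Sum>a\<in>A. p a * exp (- d a))
      \<le> (\<Sum>a\<in>A. p a * exp \<bar>d a\<bar>) * (\<Sum>a\<in>A. p a * exp \<bar>d a\<bar>)"
    using assms le[of d] le[of "\<lambda>a. - d a"] abs_ge_self abs_ge_minus_self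
    by (intro mult_mono sum_nonneg) auto
  then show ?thesis by (simp add: power2_eq_square)
qed

lemma gibbs_coverability_le:
  fixes w f g :: "'a::finite \<Rightarrow> real"
  assumes "\<And>a. 0 < w a"
  shows "(\<Sum>a\<in>UNIV. gibbs w f a * (gibbs w f a / gibbs w g a))
    \<le> (\<Sum>a\<in>UNIV. gibbs w f a * exp \<bar>f a - g a - c\<bar>)\<^sup>2"
proof -
  let ?d = "\<lambda>a. f a - g a - c"
  have "(\<Sum>a\<in>UNIV. gibbs w f a * (gibbs w f a / gibbs w g a))
      = (\<Sum>a\<in>UNIV. gibbs w f a * exp (?d a)) * (\<Sum>a\<in>UNIV. gibbs w f a * exp (- ?d a))"
    using assms by (simp add: gibbs_ratio[where c=c] sum_distrib_right mult.assoc)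
  also have "\<dots> \<le> (\<Sum>a\<in>UNIV. gibbs w f a * exp \<bar>?d a\<bar>)\<^sup>2"
    using gibbs_pos[OF assms] by (intro sum_exp_mult_sum_exp_neg_le less_imp_le)
  finally show ?thesis .
qed

lemma opt_policy_coverability_le:
  assumes "0 < \<beta>" and "\<And>a. 0 < \<pi>ref s a"
  shows "(\<Sum>a\<in>UNIV. opt_policy \<pi>ref \<beta> rstar s a
              * (opt_policy \<pi>ref \<beta> rstar s a / opt_policy \<pi>ref \<beta> r s a))
    \<le> (\<Sum>a\<in>UNIV. opt_policy \<pi>ref \<beta> rstar s a * exp (\<bar>rstar s a - r s a - b\<bar> / \<beta>))\<^sup>2"
proof -
  have "\<bar>rstar s a / \<beta> - r s a / \<beta> - b / \<beta>\<bar> = \<bar>rstar s a - r s a - b\<bar> / \<beta>" for a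
    using assms(1) by (simp add: abs_divide flip: diff_divide_distrib)
  then show ?thesis
    using gibbs_coverability_le[OF assms(2),
        where f = "\<lambda>a. rstar s a / \<beta>" and g = "\<lambda>a. r s a / \<beta>" and c = "b / \<beta>"]
    by (simp add: opt_policy_eq_gibbs)
qed

lemma opt_policy_measurable [measurable]:
  assumes "\<And>a. (\<lambda>s. \<pi>ref s a) \<in> borel_measurable M" "\<And>a. (\<lambda>s. r s a) \<in> borel_measurable M"
  shows "(\<lambda>s. opt_policy \<pi>ref \<beta> r s a) \<in> borel_measurable M"
proof -
  note [measurable] = assms
  show ?thesis unfolding opt_policy_def by measurable
qed

theorem lemmaE5:
  fixes \<rho> :: "'s measure"
    and \<pi>ref :: "'s \<Rightarrow> 'a::finite \<Rightarrow> real"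
    and \<beta> R :: real
    and rstar r :: "'s \<Rightarrow> 'a \<Rightarrow> real"
    and PiC :: "('s \<Rightarrow> 'a \<Rightarrow> real) set"
  assumes rho: "prob_space \<rho>"
    and ref_pol: "is_policy \<pi>ref"
    and ref_full: "\<forall>s a. 0 < \<pi>ref s a"
    and ref_meas: "\<forall>a. (\<lambda>s. \<pi>ref s a) \<in> borel_measurable \<rho>"
    and beta: "0 < \<beta>"
    and Rpos: "0 < R"
    and rstar_range: "\<forall>s a. 0 \<le> rstar s a \<and> rstar s a \<le> R"
    and rstar_meas: "\<forall>a. (\<lambda>s. rstar s a) \<in> borel_measurable \<rho>"
    and Pi_fin: "finite PiC"
    and Pi_pol: "\<forall>\<pi>\<in>PiC. is_policy \<pi>"
    and opt_in: "opt_policy \<pi>ref \<beta> rstar \<in> PiC"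
    and Pi_bound: "\<forall>\<pi>\<in>PiC. \<forall>s a. 0 < \<pi> s a \<and> \<bar>ln (\<pi> s a / \<pi>ref s a)\<bar> \<le> R / \<beta>"
    and r_bdd: "\<exists>B. \<forall>s a. \<bar>r s a\<bar> \<le> B"
    and r_meas: "\<forall>a. (\<lambda>s. r s a) \<in> borel_measurable \<rho>"
  shows "Cov \<rho> (opt_policy \<pi>ref \<beta> rstar) (opt_policy \<pi>ref \<beta> r)
    \<le> (INF b::real. \<integral>s. (\<Sum>a\<in>UNIV. opt_policy \<pi>ref \<beta> rstar s a
                 * exp (\<bar>rstar s a - r s a - b\<bar> / \<beta>))\<^sup>2 \<partial>\<rho>)"
proof -
  interpret prob_space \<rho> by (rule rho)
  note [measurable] = ref_meas[rule_format] rstar_meas[rule_format] r_meas[rule_format]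
  obtain B where B: "\<And>s a. \<bar>r s a\<bar> \<le> B" using r_bdd by blast
  let ?ps = "opt_policy \<pi>ref \<beta> rstar"
  have "Cov \<rho> ?ps (opt_policy \<pi>ref \<beta> r)
      \<le> (\<integral>s. (\<Sum>a\<in>UNIV. ?ps s a * exp (\<bar>rstar s a - r s a - b\<bar> / \<beta>))\<^sup>2 \<partial>\<rho>)" for b
  proof -
    define f where "f s = (\<Sum>a\<in>UNIV. ?ps s a * exp (\<bar>rstar s a - r s a - b\<bar> / \<beta>))" for s
    have f_nonneg: "0 \<le> f s" for s
      unfolding f_def opt_policy_eq_gibbs
      by (intro sum_nonneg mult_nonneg_nonneg less_imp_le[OF gibbs_pos]) (simp_all add: ref_full)
    have "\<bar>rstar s a - r s a - b\<bar> \<le> R + B + \<bar>b\<bar>" for s a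
      using rstar_range[rule_format, of s a] B[of s a] by (auto simp: abs_le_iff split: abs_split)
    then have "f s \<le> exp ((R + B + \<bar>b\<bar>) / \<beta>)" for s
      unfolding f_def opt_policy_eq_gibbs using ref_full beta
      by (intro sum_gibbs_mult_le) (auto simp: divide_right_mono)
    then have f_integrable: "integrable \<rho> (\<lambda>s. (f s)\<^sup>2)"
      using f_nonneg
      by (intro integrable_const_bound[where B = "(exp ((R + B + \<bar>b\<bar>) / \<beta>))\<^sup>2"])
         (auto simp: f_def intro!: power_mono)
    have "(\<Sum>a\<in>UNIV. ?ps s a * (?ps s a / opt_policy \<pi>ref \<beta> r s a)) \<le> (f s)\<^sup>2" for s
      unfolding f_def using beta ref_full by (intro opt_policy_coverability_le) auto
    then show ?thesis
      unfolding Cov_def f_def[symmetric] by (intro integral_mono'[OF f_integrable]) auto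
  qed
  then show ?thesis by (intro cINF_greatest) auto
qed

end
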